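(* If a regular WCF-end of a flat front is cylindrical, then $q_{-2}>0$ and $\mathrm{ord}_0|\omega|^2=\mathrm{ord}_0|\theta|^2=-1$.
   Context: Flat front on $D^*=\{0<|z|<1\}$: $f=\mathcal{E}\mathcal{E}^*$ into $H^3=\{uu^*:u\in SL(2,\mathbb{C})\}$, $\mathcal{E}$ a holomorphic immersion of the universal cover into $SL(2,\mathbb{C})$ with $\mathcal{E}^{-1}d\mathcal{E}=\begin{pmatrix}0&\theta\\ \omega&0\end{pmatrix}$; $z$ compatible with $ds^2_{1,1}=|\omega|^2+|\theta|^2$; hyperbolic Gauss maps $G=E_{11}/E_{21}$, $G_*=E_{12}/E_{22}$; Hopf differential $Q=\omega\theta$. WCF-end: $ds^2_{1,1}$ complete at $0$ with finite total curvature near $0$; regular: $G,G_*$ have at most poles at $0$. Writing $\omega=z^\mu\omega_1dz$, $\theta=z^{\mu_*}\theta_1dz$ with $\omega_1,\theta_1$ holomorphic and non-zero at $0$, $\mathrm{ord}_0|\omega|^2=\mu$, $\mathrm{ord}_0|\theta|^2=\mu_*$. For a regular WCF-end, $Q=z^{-2}(q_{-2}+o(1))dz^2$ ($q_{-2}$ the top-term coefficient); the end is cylindrical if $\mathrm{ord}_0|\omega|^2=\mathrm{ord}_0|\theta|^2$. *)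

theory Defs
  imports "HOL-Complex_Analysis.Complex_Analysis"
begin

text \<open>The punctured unit disk D* = {0 < |z| < 1} and its universal cover,
  the left half plane {Re w < 0}, with covering map z = exp w.
  The inverse branch used to push single-valued quantities down to D* is Ln.\<close>

definition punct_disk :: "complex set" where
  "punct_disk = {z. 0 < cmod z \<and> cmod z < 1}"

definition left_half_plane :: "complex set" where
  "left_half_plane = {w. Re w < 0}"

definition mderiv :: "(complex \<Rightarrow> complex^2^2) \<Rightarrow> complex \<Rightarrow> complex^2^2" where
  "mderiv E w = (\<chi> i j. deriv (\<lambda>u. E u $ i $ j) w)"

definition offdiag :: "complex \<Rightarrow> complex \<Rightarrow> complex^2^2" where
  "offdiag a b = (\<chi> i j. if i = 1 \<and> j = 2 then a else if i = 2 \<and> j = 1 then b else 0)"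

definition cstar :: "complex^2^2 \<Rightarrow> complex^2^2" where
  "cstar A = (\<chi> i j. cnj (A $ j $ i))"

text \<open>Flat front on D*: E holomorphic immersion of the universal cover into SL(2,C),
  E^{-1} dE = [[0, theta],[omega, 0]] (omega = om w dw, theta = th w dw),
  and f = E E^* single valued on D* (invariant under the deck transformation w -> w + 2 pi i).\<close>
definition flat_front :: "(complex \<Rightarrow> complex^2^2) \<Rightarrow> (complex \<Rightarrow> complex) \<Rightarrow> (complex \<Rightarrow> complex) \<Rightarrow> bool" where
  "flat_front E om th \<longleftrightarrow>
     (\<forall>i j. (\<lambda>w. E w $ i $ j) holomorphic_on left_half_plane) \<and>
     om holomorphic_on left_half_plane \<and> th holomorphic_on left_half_plane \<and>
     (\<forall>w\<in>left_half_plane. det (E w) = 1) \<and>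
     (\<forall>w\<in>left_half_plane. mderiv E w \<noteq> 0) \<and>
     (\<forall>w\<in>left_half_plane. matrix_inv (E w) ** mderiv E w = offdiag (th w) (om w)) \<and>
     (\<forall>w\<in>left_half_plane.
        E (w + 2 * pi * \<i>) ** cstar (E (w + 2 * pi * \<i>)) = E w ** cstar (E w))"

text \<open>Coefficient of |omega|^2 with respect to |dz|^2 on D*: omega = om(w) dw = om(Ln z)/z dz.\<close>
definition metric_coeff :: "(complex \<Rightarrow> complex) \<Rightarrow> complex \<Rightarrow> real" where
  "metric_coeff om z = (cmod (om (Ln z)))\<^sup>2 / (cmod z)\<^sup>2"

text \<open>Conformal factor rho of ds^2_{1,1} = |omega|^2 + |theta|^2 = rho^2 |dz|^2.\<close>
definition rho11 :: "(complex \<Rightarrow> complex) \<Rightarrow> (complex \<Rightarrow> complex) \<Rightarrow> complex \<Rightarrow> real" where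
  "rho11 om th z = sqrt (metric_coeff om z + metric_coeff th z)"

definition lapl :: "(complex \<Rightarrow> real) \<Rightarrow> complex \<Rightarrow> real" where
  "lapl u z = deriv (deriv (\<lambda>t::real. u (z + complex_of_real t))) 0
            + deriv (deriv (\<lambda>t::real. u (z + \<i> * complex_of_real t))) 0"

definition curv11 :: "(complex \<Rightarrow> complex) \<Rightarrow> (complex \<Rightarrow> complex) \<Rightarrow> complex \<Rightarrow> real" where
  "curv11 om th z = - lapl (\<lambda>x. ln (rho11 om th x)) z / (rho11 om th z)\<^sup>2"

definition complete_at_0 :: "(complex \<Rightarrow> complex) \<Rightarrow> (complex \<Rightarrow> complex) \<Rightarrow> bool" where
  "complete_at_0 om th \<longleftrightarrow>
     (\<forall>\<gamma>::real \<Rightarrow> complex.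
        \<gamma> C1_differentiable_on {0..<1} \<and> (\<forall>t\<in>{0..<1}. \<gamma> t \<in> punct_disk) \<and>
        (\<gamma> \<longlongrightarrow> 0) (at_left 1) \<longrightarrow>
        \<not> (\<lambda>t. rho11 om th (\<gamma> t) * norm (vector_derivative \<gamma> (at t))) integrable_on {0..<1})"

definition finite_total_curvature_at_0 :: "(complex \<Rightarrow> complex) \<Rightarrow> (complex \<Rightarrow> complex) \<Rightarrow> bool" where
  "finite_total_curvature_at_0 om th \<longleftrightarrow>
     (\<exists>r>0. r \<le> 1 \<and>
        (\<lambda>z. \<bar>curv11 om th z\<bar> * (rho11 om th z)\<^sup>2) integrable_on (ball 0 r - {0}))"

definition WCF_end :: "(complex \<Rightarrow> complex) \<Rightarrow> (complex \<Rightarrow> complex) \<Rightarrow> bool" where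
  "WCF_end om th \<longleftrightarrow> complete_at_0 om th \<and> finite_total_curvature_at_0 om th"

definition hypGauss :: "(complex \<Rightarrow> complex^2^2) \<Rightarrow> complex \<Rightarrow> complex" where
  "hypGauss E w = E w $ 1 $ 1 / E w $ 2 $ 1"

definition hypGauss_star :: "(complex \<Rightarrow> complex^2^2) \<Rightarrow> complex \<Rightarrow> complex" where
  "hypGauss_star E w = E w $ 1 $ 2 / E w $ 2 $ 2"

definition regular_end :: "(complex \<Rightarrow> complex^2^2) \<Rightarrow> bool" where
  "regular_end E \<longleftrightarrow>
     (\<lambda>z. hypGauss E (Ln z)) meromorphic_on {0} \<and>
     (\<lambda>z. hypGauss_star E (Ln z)) meromorphic_on {0}"

definition regular_WCF_end :: "(complex \<Rightarrow> complex^2^2) \<Rightarrow> (complex \<Rightarrow> complex) \<Rightarrow> (complex \<Rightarrow> complex) \<Rightarrow> bool" where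
  "regular_WCF_end E om th \<longleftrightarrow> WCF_end om th \<and> regular_end E"

text \<open>ord_0 of a metric coefficient: a = |z|^{2 mu} |phi|^2 near 0 with phi holomorphic, phi 0 \<noteq> 0
  (i.e. omega = z^mu omega_1 dz with omega_1 holomorphic and non-zero at 0).\<close>
definition has_ord0 :: "(complex \<Rightarrow> real) \<Rightarrow> real \<Rightarrow> bool" where
  "has_ord0 a \<mu> \<longleftrightarrow>
     (\<exists>r>0. \<exists>\<phi>. \<phi> holomorphic_on ball 0 r \<and> \<phi> 0 \<noteq> 0 \<and>
        (\<forall>z\<in>ball 0 r - {0}. a z = cmod z powr (2 * \<mu>) * (cmod (\<phi> z))\<^sup>2))"

definition cylindrical :: "(complex \<Rightarrow> complex) \<Rightarrow> (complex \<Rightarrow> complex) \<Rightarrow> bool" where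
  "cylindrical om th \<longleftrightarrow> (\<exists>\<mu>. has_ord0 (metric_coeff om) \<mu> \<and> has_ord0 (metric_coeff th) \<mu>)"

text \<open>Hopf differential Q = omega theta = hopf_coeff z dz^2 on D*.\<close>
definition hopf_coeff :: "(complex \<Rightarrow> complex) \<Rightarrow> (complex \<Rightarrow> complex) \<Rightarrow> complex \<Rightarrow> complex" where
  "hopf_coeff om th z = om (Ln z) * th (Ln z) / z\<^sup>2"

end

theory Submission
  imports Defs
begin

text \<open>On the universal cover the cylindrical hypothesis makes \<open>\<omega>\<close> and \<open>\<theta>\<close> unimodular
  multiples of \<open>e^{sw} \<phi>(e^w)\<close> and \<open>e^{sw} \<psi>(e^w)\<close> with \<open>s = \<mu> + 1\<close> and \<open>\<phi>(0), \<psi>(0) \<noteq> 0\<close>,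
  and completeness forces \<open>s \<le> 0\<close>. The Gauss maps satisfy \<open>z G' = -\<omega>/E\<^sub>2\<^sub>1^2\<close>,
  \<open>z G\<^sub>*' = \<theta>/E\<^sub>2\<^sub>2^2\<close> and \<open>G - G\<^sub>* = 1/(E\<^sub>2\<^sub>1 E\<^sub>2\<^sub>2)\<close>; differentiating once more expresses
  \<open>z G'/(G - G\<^sub>*)\<close> and \<open>z G\<^sub>*'/(G - G\<^sub>*)\<close> through logarithmic derivatives, whose limits
  as \<open>z \<rightarrow> 0\<close> are given by the orders \<open>a, b\<close> of \<open>G', G\<^sub>*'\<close> at 0. Hence
  \<open>z^2 Q = -(z G')(z G\<^sub>*')/(G - G\<^sub>*)^2\<close> has a finite limit, which is incompatible with its
  growth like \<open>|z|^{2s}\<close> unless \<open>s = 0\<close>; the order of \<open>G - G\<^sub>*\<close> then forces the limit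
  \<open>(1+a)(1+b)/4\<close> to be positive.\<close>

section \<open>Structure equations of a flat front\<close>

lemma mat2_mult_entry: "((A::complex^2^2) ** B) $ i $ j = A$i$1 * B$1$j + A$i$2 * B$2$j"
  by (simp add: matrix_matrix_mult_def sum_2)

lemma flat_front_ode:
  fixes E :: "complex \<Rightarrow> complex^2^2" and om th :: "complex \<Rightarrow> complex"
  assumes ff: "flat_front E om th" and w: "w \<in> left_half_plane"
  shows "((\<lambda>u. E u $ 1 $ 1) has_field_derivative E w $ 1 $ 2 * om w) (at w)"
    and "((\<lambda>u. E u $ 2 $ 1) has_field_derivative E w $ 2 $ 2 * om w) (at w)"
    and "((\<lambda>u. E u $ 1 $ 2) has_field_derivative E w $ 1 $ 1 * th w) (at w)"
    and "((\<lambda>u. E u $ 2 $ 2) has_field_derivative E w $ 2 $ 1 * th w) (at w)"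
    and "E w $ 1 $ 1 * E w $ 2 $ 2 - E w $ 1 $ 2 * E w $ 2 $ 1 = 1"
proof -
  have hol: "\<And>i j. (\<lambda>w. E w $ i $ j) holomorphic_on left_half_plane"
    and det1: "det (E w) = 1"
    and rel: "matrix_inv (E w) ** mderiv E w = offdiag (th w) (om w)"
    using ff w unfolding flat_front_def by auto
  have "invertible (E w)" using det1 invertible_det_nz by force
  then have "E w ** matrix_inv (E w) = mat 1"
    unfolding matrix_inv_def invertible_def by (rule someI_ex[THEN conjunct1])
  then have M: "mderiv E w = E w ** offdiag (th w) (om w)"
    by (metis matrix_mul_assoc matrix_mul_lid rel)
  have D: "((\<lambda>u. E u $ i $ j) has_field_derivative mderiv E w $ i $ j) (at w)" for i j
  proof -
    have "open left_half_plane"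
      unfolding left_half_plane_def by (simp add: open_halfspace_Re_lt)
    then have "(\<lambda>w. E w $ i $ j) field_differentiable at w"
      using hol[of i j] w holomorphic_on_imp_differentiable_at by blast
    then show ?thesis
      unfolding mderiv_def by (simp add: field_differentiable_derivI)
  qed
  have offdiag_entries: "offdiag a b $ 1 $ 2 = a" "offdiag a b $ 2 $ 1 = b"
    "offdiag a b $ 1 $ 1 = 0" "offdiag a b $ 2 $ 2 = 0" for a b
    unfolding offdiag_def by simp_all
  show "((\<lambda>u. E u $ 1 $ 1) has_field_derivative E w $ 1 $ 2 * om w) (at w)"
    "((\<lambda>u. E u $ 2 $ 1) has_field_derivative E w $ 2 $ 2 * om w) (at w)"
    "((\<lambda>u. E u $ 1 $ 2) has_field_derivative E w $ 1 $ 1 * th w) (at w)"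
    "((\<lambda>u. E u $ 2 $ 2) has_field_derivative E w $ 2 $ 1 * th w) (at w)"
    using D[of 1 1] D[of 2 1] D[of 1 2] D[of 2 2]
    by (simp_all add: M mat2_mult_entry offdiag_entries)
  show "E w $ 1 $ 1 * E w $ 2 $ 2 - E w $ 1 $ 2 * E w $ 2 $ 1 = 1"
    using det1 by (simp add: det_2)
qed

section \<open>The logarithmic chart of the punctured disk\<close>

lemma exp_in_ball_of_Re_less_ln:
  assumes "0 < r" "Re w < ln r"
  shows "exp w \<in> ball 0 r"
proof -
  have "exp (Re w) < exp (ln r)" using assms(2) by simp
  then show ?thesis using assms(1) by simp
qed

definition log_slit_disk :: "real \<Rightarrow> complex set" where
  "log_slit_disk \<rho> = {w. Re w < ln \<rho> \<and> - pi < Im w \<and> Im w < pi}"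

lemma open_log_slit_disk: "open (log_slit_disk \<rho>)"
  unfolding log_slit_disk_def Collect_conj_eq
  by (intro open_Int open_halfspace_Re_lt open_halfspace_Im_gt open_halfspace_Im_lt)

lemma log_slit_disk_D:
  assumes "w \<in> log_slit_disk \<rho>" "0 < \<rho>"
  shows "Ln (exp w) = w" and "exp w \<in> ball 0 \<rho> - {0}"
proof -
  show "Ln (exp w) = w" using assms by (intro Ln_exp) (auto simp: log_slit_disk_def)
  show "exp w \<in> ball 0 \<rho> - {0}"
    using exp_in_ball_of_Re_less_ln[OF assms(2)] assms(1) by (simp add: log_slit_disk_def)
qed

lemma exp_of_real_ln: "0 < t \<Longrightarrow> exp (complex_of_real (ln t)) = of_real t"
  by (metis exp_ln exp_of_real)

lemma ln_in_log_slit_disk: "0 < t \<Longrightarrow> t < \<rho> \<Longrightarrow> complex_of_real (ln t) \<in> log_slit_disk \<rho>"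
  by (simp add: log_slit_disk_def)

lemma holomorphic_on_ball_isCont_0:
  "0 < r \<Longrightarrow> f holomorphic_on ball 0 r \<Longrightarrow> isCont f 0"
  by (metis centre_in_ball continuous_on_eq_continuous_at holomorphic_on_imp_continuous_on open_ball)

lemma DERIV_unique_on_open:
  assumes "(f has_field_derivative f') (at w)" "(g has_field_derivative g') (at w)"
    and "open S" "w \<in> S" "\<And>v. v \<in> S \<Longrightarrow> f v = g v"
  shows "f' = g'"
  using DERIV_unique[OF has_field_derivative_transform_within_open[OF assms(1,3,4)] assms(2)] assms(5)
  by auto

lemma has_field_derivative_comp_exp:
  assumes "f holomorphic_on A" "open A" "exp w \<in> A"
  shows "((\<lambda>v. f (exp v)) has_field_derivative exp w * deriv f (exp w)) (at w)"
  using DERIV_chain2[OF holomorphic_derivI[OF assms] DERIV_exp] by (simp add: mult.commute)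

lemma has_field_derivative_exp_power_rep:
  fixes m \<phi> :: "complex \<Rightarrow> complex" and s r :: real
  assumes r: "0 < r" and \<phi>: "\<phi> holomorphic_on ball 0 r"
    and rep: "\<forall>v. Re v < ln r \<longrightarrow> m v = c * exp (of_real s * v) * \<phi> (exp v)"
    and w: "Re w < ln r" and \<phi>_nz: "\<phi> (exp w) \<noteq> 0"
  shows "(m has_field_derivative m w * (of_real s + exp w * deriv \<phi> (exp w) / \<phi> (exp w))) (at w)"
proof -
  have "exp w \<in> ball 0 r" using r w by (rule exp_in_ball_of_Re_less_ln)
  then have "((\<lambda>v. \<phi> (exp v)) has_field_derivative exp w * deriv \<phi> (exp w)) (at w)"
    by (intro has_field_derivative_comp_exp[OF \<phi>]) auto
  moreover have "((\<lambda>v. c * exp (of_real s * v)) has_field_derivative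
      c * (exp (of_real s * w) * of_real s)) (at w)"
    by (intro DERIV_cmult DERIV_chain2[where f=exp and g="\<lambda>v. of_real s * v"] DERIV_exp DERIV_cmult_Id)
  ultimately have "((\<lambda>v. c * exp (of_real s * v) * \<phi> (exp v)) has_field_derivative
      c * (exp (of_real s * w) * of_real s) * \<phi> (exp w)
      + c * exp (of_real s * w) * (exp w * deriv \<phi> (exp w))) (at w)"
    by (rule DERIV_mult[rotated, THEN DERIV_cong]) (simp add: algebra_simps)
  then have "((\<lambda>v. c * exp (of_real s * v) * \<phi> (exp v)) has_field_derivative
      m w * (of_real s + exp w * deriv \<phi> (exp w) / \<phi> (exp w))) (at w)"
    by (rule DERIV_cong) (use rep w \<phi>_nz in \<open>simp add: field_simps\<close>)
  then show ?thesis
    by (rule has_field_derivative_transform_within_open[of _ _ _ "{v. Re v < ln r}"])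
       (use rep w in \<open>auto intro: open_halfspace_Re_lt\<close>)
qed

lemma has_field_derivative_divide_square:
  fixes m v :: "complex \<Rightarrow> complex"
  assumes "(m has_field_derivative m') (at w)" "(v has_field_derivative y * m w) (at w)"
    and "v w \<noteq> 0" "m w \<noteq> 0"
  shows "((\<lambda>u. m u / (v u)\<^sup>2) has_field_derivative
           m w / (v w)\<^sup>2 * (m' / m w - 2 * y * m w / v w)) (at w)"
proof -
  have "((\<lambda>u. (v u)\<^sup>2) has_field_derivative 2 * v w * (y * m w)) (at w)"
    by (rule DERIV_cong[OF DERIV_power[OF assms(2), of 2]]) simp
  from DERIV_divide[OF assms(1) this]
  have "((\<lambda>u. m u / (v u)\<^sup>2) has_field_derivative
      (m' * (v w)\<^sup>2 - m w * (2 * v w * (y * m w))) / ((v w)\<^sup>2 * (v w)\<^sup>2)) (at w)"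
    using assms(3) by simp
  then show ?thesis
    by (rule DERIV_cong) (use assms(3,4) in \<open>simp add: field_simps power2_eq_square\<close>)
qed

lemma logderiv_deriv_in_exp_chart:
  fixes f P :: "complex \<Rightarrow> complex"
  assumes f: "f holomorphic_on A" "open A" "exp w \<in> A" and S: "open S" "w \<in> S"
    and P: "\<And>v. v \<in> S \<Longrightarrow> exp v * deriv f (exp v) = P v"
    and P': "(P has_field_derivative P w * K) (at w)" and "P w \<noteq> 0"
  shows "exp w * deriv (deriv f) (exp w) / deriv f (exp w) = K - 1"
proof -
  define x where "x = exp w"
  have "((\<lambda>v. exp v * deriv f (exp v)) has_field_derivative
      x * deriv f x + x * (x * deriv (deriv f) x)) (at w)"
    using DERIV_mult[OF DERIV_exp has_field_derivative_comp_exp[OF holomorphic_deriv[OF f(1,2)] f(2,3)]]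
    by (simp add: x_def mult_ac)
  then have "x * deriv f x + x * (x * deriv (deriv f) x) = P w * K"
    using DERIV_unique_on_open[OF _ P' S] P by blast
  moreover have "x * deriv f x = P w" "x \<noteq> 0"
    using P[OF S(2)] by (simp_all add: x_def)
  ultimately have "x * (x * deriv (deriv f) x) = P w * (K - 1)"
    by (simp add: algebra_simps)
  have "exp w * deriv (deriv f) (exp w) / deriv f (exp w) = x * (x * deriv (deriv f) x) / (x * deriv f x)"
    using \<open>x \<noteq> 0\<close> by (simp add: x_def)
  also have "\<dots> = K - 1"
    using \<open>x * (x * deriv (deriv f) x) = P w * (K - 1)\<close> \<open>x * deriv f x = P w\<close> \<open>P w \<noteq> 0\<close> by simp
  finally show ?thesis .
qed

lemma numerator_zero_of_continuous_quotient:
  fixes f k G :: "complex \<Rightarrow> complex"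
  assumes f: "(f has_field_derivative f') (at w)" "f' \<noteq> 0" "f w = 0"
    and "isCont k w" "isCont G w"
    and quot: "eventually (\<lambda>v. f v \<noteq> 0 \<longrightarrow> G v = k v / f v) (at w)"
  shows "k w = 0"
proof -
  have "((\<lambda>v. (f v - f w) / (v - w)) \<longlongrightarrow> f') (at w)"
    using f(1) by (simp add: has_field_derivative_iff)
  then have "eventually (\<lambda>v. (f v - f w) / (v - w) \<noteq> 0) (at w)"
    using f(2) by (rule tendsto_imp_eventually_ne)
  with quot have "eventually (\<lambda>v. G v * f v = k v) (at w)"
    by eventually_elim (use f(3) in auto)
  moreover have "((\<lambda>v. G v * f v) \<longlongrightarrow> G w * f w) (at w)"
    using \<open>isCont G w\<close> DERIV_isCont[OF f(1)] by (intro tendsto_intros) (auto simp: isCont_def)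
  ultimately have "(k \<longlongrightarrow> 0) (at w)"
    using f(3) by (simp add: tendsto_cong)
  then show ?thesis
    using \<open>isCont k w\<close> tendsto_unique[of "at w" k] by (auto simp: isCont_def)
qed

section \<open>Lifting the metric coefficients\<close>

lemma holomorphic_unimodular_multiple_of_eq_norm:
  fixes f h :: "complex \<Rightarrow> complex"
  assumes "f holomorphic_on D" "h holomorphic_on D" "open D" "connected D"
    and h_nz: "\<And>w. w \<in> D \<Longrightarrow> h w \<noteq> 0"
    and "open U" "U \<subseteq> D" "\<xi> \<in> U"
    and eq_norm: "\<And>w. w \<in> U \<Longrightarrow> cmod (f w) = cmod (h w)"
  shows "\<exists>c. cmod c = 1 \<and> (\<forall>w\<in>D. f w = c * h w)"
proof -
  define k where "k w = f w / h w" for w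
  have norm_k: "cmod (k w) = 1" if "w \<in> U" for w
    using eq_norm[OF that] h_nz that \<open>U \<subseteq> D\<close> by (auto simp: k_def norm_divide)
  have "k holomorphic_on D"
    unfolding k_def using assms by (intro holomorphic_intros) auto
  then have "k constant_on D"
    by (rule maximum_modulus_principle) (use assms norm_k in auto)
  then obtain c where c: "\<And>w. w \<in> D \<Longrightarrow> k w = c"
    unfolding constant_on_def by blast
  have "cmod c = 1"
    using norm_k[OF \<open>\<xi> \<in> U\<close>] c \<open>\<xi> \<in> U\<close> \<open>U \<subseteq> D\<close> by auto
  moreover have "f w = c * h w" if "w \<in> D" for w
    using c[OF that] h_nz[OF that] by (simp add: k_def field_simps)
  ultimately show ?thesis by blast
qed

text \<open>On the universal cover \<open>om\<close> and \<open>e^{(\<mu>+1)w} \<phi>(e^w)\<close> have the same modulus, so by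
  the maximum modulus principle their quotient is a unimodular constant.\<close>

lemma metric_coeff_ord0_lift:
  fixes om \<phi> :: "complex \<Rightarrow> complex" and \<mu> r :: real
  assumes hol: "om holomorphic_on left_half_plane" and r: "0 < r" "r \<le> 1"
    and \<phi>_hol: "\<phi> holomorphic_on ball 0 r" and \<phi>_nz: "\<forall>z\<in>ball 0 r. \<phi> z \<noteq> 0"
    and eq: "\<forall>z\<in>ball 0 r - {0}. metric_coeff om z = cmod z powr (2*\<mu>) * (cmod (\<phi> z))\<^sup>2"
  shows "\<exists>c. cmod c = 1 \<and>
           (\<forall>w. Re w < ln r \<longrightarrow> om w = c * exp (of_real (\<mu>+1) * w) * \<phi> (exp w))"
proof -
  define D where "D = {w. Re w < ln r}"
  define h where "h w = exp (of_real (\<mu>+1) * w) * \<phi> (exp w)" for w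
  have exp_in_ball: "exp w \<in> ball 0 r" if "w \<in> D" for w
    using exp_in_ball_of_Re_less_ln[OF r(1)] that by (simp add: D_def)
  have "D \<subseteq> left_half_plane"
    using r unfolding D_def left_half_plane_def by (auto intro: order.strict_trans2)
  then have "om holomorphic_on D" by (rule holomorphic_on_subset[OF hol])
  moreover have "h holomorphic_on D" unfolding h_def
    by (intro holomorphic_intros holomorphic_on_compose_gen[OF _ \<phi>_hol, unfolded o_def])
       (auto intro: exp_in_ball)
  moreover have "h w \<noteq> 0" if "w \<in> D" for w
    using \<phi>_nz exp_in_ball[OF that] by (simp add: h_def)
  moreover have "cmod (om w) = cmod (h w)" if "w \<in> log_slit_disk r" for w
  proof -
    note w = log_slit_disk_D[OF that r(1)]
    then have "metric_coeff om (exp w) = exp (Re w) powr (2*\<mu>) * (cmod (\<phi> (exp w)))\<^sup>2"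
      using eq by simp
    then have "(cmod (om w))\<^sup>2 / (exp (Re w))\<^sup>2 = exp (Re w) powr (2*\<mu>) * (cmod (\<phi> (exp w)))\<^sup>2"
      by (simp add: metric_coeff_def w(1))
    then have "(cmod (om w))\<^sup>2 = (exp ((\<mu>+1) * Re w) * cmod (\<phi> (exp w)))\<^sup>2"
      by (simp add: field_simps powr_def power2_eq_square algebra_simps flip: exp_add)
    then show ?thesis
      by (simp add: h_def norm_mult power2_eq_imp_eq)
  qed
  moreover have "open D" "connected D" "log_slit_disk r \<subseteq> D" "of_real (ln r - 1) \<in> log_slit_disk r"
    unfolding D_def log_slit_disk_def
    by (auto intro: open_halfspace_Re_lt convex_connected convex_halfspace_Re_lt)
  ultimately have "\<exists>c. cmod c = 1 \<and> (\<forall>w\<in>D. om w = c * h w)"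
    by (intro holomorphic_unimodular_multiple_of_eq_norm[OF _ _ _ _ _ open_log_slit_disk]) auto
  then show ?thesis by (auto simp: D_def h_def mult.assoc)
qed

section \<open>Completeness bounds the order\<close>

lemma power_path_to_0:
  fixes a p :: real
  assumes a: "0 < a" and p: "0 < p"
  defines "\<gamma> \<equiv> \<lambda>t. complex_of_real (a * (1 - t) powr p)"
  shows "\<gamma> C1_differentiable_on {0..<1}"
    and "(\<gamma> \<longlongrightarrow> 0) (at_left 1)"
    and "continuous_on {0..1} \<gamma>"
    and "\<And>t. 0 \<le> t \<Longrightarrow> t \<le> 1 \<Longrightarrow> cmod (\<gamma> t) \<le> a"
    and "\<And>t. t < 1 \<Longrightarrow> cmod (\<gamma> t) = a * (1 - t) powr p \<and> \<gamma> t \<noteq> 0"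
    and "\<And>t. t < 1 \<Longrightarrow> norm (vector_derivative \<gamma> (at t)) = a * p * (1 - t) powr (p - 1)"
proof -
  define D where "D t = complex_of_real (a * (p * (1 - t) powr (p - 1) * (-1)))" for t
  have der: "(\<gamma> has_vector_derivative D t) (at t)" if "t < 1" for t
    unfolding \<gamma>_def D_def using that
    by (intro has_vector_derivative_of_real) (auto intro!: derivative_eq_intros)
  show "\<gamma> C1_differentiable_on {0..<1}"
    unfolding C1_differentiable_on_def
    by (intro exI[of _ D] conjI ballI der) (auto simp: D_def intro!: continuous_intros)
  have "((\<lambda>t. (1 - t) powr p) \<longlongrightarrow> 0) (at_left (1::real))"
    by (rule tendsto_zero_powrI)
       (auto intro!: tendsto_eq_intros p exI[of _ 0] simp: eventually_at_left_field)
  then have "((\<lambda>t. complex_of_real (a * (1 - t) powr p)) \<longlongrightarrow> of_real (a * 0)) (at_left 1)"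
    by (intro tendsto_of_real tendsto_intros)
  then show "(\<gamma> \<longlongrightarrow> 0) (at_left 1)" by (simp add: \<gamma>_def)
  show "continuous_on {0..1} \<gamma>"
    unfolding \<gamma>_def using p by (intro continuous_intros continuous_on_powr') auto
  show "cmod (\<gamma> t) \<le> a" if "0 \<le> t" "t \<le> 1" for t
  proof -
    have "(1 - t) powr p \<le> 1 powr p" using that p by (intro powr_mono2) auto
    then show ?thesis using a by (simp add: \<gamma>_def norm_mult mult_left_le)
  qed
  show "cmod (\<gamma> t) = a * (1 - t) powr p \<and> \<gamma> t \<noteq> 0" if "t < 1" for t
    using that a by (simp add: \<gamma>_def norm_mult)
  show "norm (vector_derivative \<gamma> (at t)) = a * p * (1 - t) powr (p - 1)" if "t < 1" for t
    using vector_derivative_at[OF der[OF that]] a p by (simp add: D_def norm_mult)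
qed

lemma rho11_of_ord0:
  assumes "\<forall>z\<in>ball 0 r - {0}. metric_coeff om z = cmod z powr (2*\<mu>) * (cmod (\<phi> z))\<^sup>2"
    and "\<forall>z\<in>ball 0 r - {0}. metric_coeff th z = cmod z powr (2*\<mu>) * (cmod (\<psi> z))\<^sup>2"
    and "z \<in> ball 0 r - {0}"
  shows "rho11 om th z = cmod z powr \<mu> * sqrt ((cmod (\<phi> z))\<^sup>2 + (cmod (\<psi> z))\<^sup>2)"
proof -
  have "cmod z powr (2 * \<mu>) = (cmod z powr \<mu>)\<^sup>2"
    by (simp add: power2_eq_square flip: powr_add)
  then show ?thesis
    using assms by (simp add: rho11_def real_sqrt_mult flip: distrib_left)
qed

text \<open>Along \<open>\<gamma>(t) = a(1-t)^{1/(\<mu>+1)}\<close> the length element \<open>\<rho>|\<gamma>'|\<close> of a metric with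
  \<open>\<rho> \<approx> |z|^\<mu>\<close> stays bounded, so for \<open>\<mu> > -1\<close> the path reaches 0 in finite length.\<close>

lemma complete_at_0_imp_ord0_le:
  fixes om th \<phi> \<psi> :: "complex \<Rightarrow> complex" and \<mu> r :: real
  assumes comp: "complete_at_0 om th" and r: "0 < r" "r \<le> 1"
    and \<phi>: "continuous_on (ball 0 r) \<phi>" and \<psi>: "continuous_on (ball 0 r) \<psi>"
    and eq_om: "\<forall>z\<in>ball 0 r - {0}. metric_coeff om z = cmod z powr (2*\<mu>) * (cmod (\<phi> z))\<^sup>2"
    and eq_th: "\<forall>z\<in>ball 0 r - {0}. metric_coeff th z = cmod z powr (2*\<mu>) * (cmod (\<psi> z))\<^sup>2"
  shows "\<mu> \<le> -1"
proof (rule ccontr)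
  assume "\<not> \<mu> \<le> -1"
  define p where "p = 1 / (\<mu> + 1)"
  define a where "a = r / 2"
  define \<gamma> where "\<gamma> t = complex_of_real (a * (1 - t) powr p)" for t
  have p: "p > 0" and p\<mu>: "p * \<mu> + (p - 1) = 0"
    using \<open>\<not> \<mu> \<le> -1\<close> by (auto simp: p_def field_simps)
  have a: "0 < a" "a < r" using r by (auto simp: a_def)
  note path = power_path_to_0[OF a(1) p, folded \<gamma>_def]
  have in_ball: "\<gamma> t \<in> ball 0 r" if "0 \<le> t" "t \<le> 1" for t
    using path(4)[OF that] a by simp
  define K where
    "K t = a powr \<mu> * (a * p) * sqrt ((cmod (\<phi> (\<gamma> t)))\<^sup>2 + (cmod (\<psi> (\<gamma> t)))\<^sup>2)" for t
  have length_element: "rho11 om th (\<gamma> t) * norm (vector_derivative \<gamma> (at t)) = K t"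
    if t: "0 \<le> t" "t < 1" for t
  proof -
    have "(a * (1 - t) powr p) powr \<mu> * (1 - t) powr (p - 1) = a powr \<mu>"
      using a t p\<mu> by (simp add: powr_mult powr_powr mult.assoc flip: powr_add)
    moreover have "\<gamma> t \<in> ball 0 r - {0}"
      using in_ball[of t] path(5)[OF t(2)] t by simp
    ultimately show ?thesis
      using rho11_of_ord0[OF eq_om eq_th] path(5,6)[OF t(2)] by (simp add: K_def algebra_simps)
  qed
  have "continuous_on {0..1} K"
    unfolding K_def using \<phi> \<psi> path(3) in_ball
    by (intro continuous_intros continuous_on_compose2[OF \<phi>] continuous_on_compose2[OF \<psi>]) auto
  then have "K integrable_on {0..1}" by (rule integrable_continuous_real)
  then have "K integrable_on {0..<1}"
    by (rule integrable_spike_set) (auto intro: negligible_subset[OF negligible_sing[of 1]])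
  then have "(\<lambda>t. rho11 om th (\<gamma> t) * norm (vector_derivative \<gamma> (at t))) integrable_on {0..<1}"
    by (subst integrable_cong[of _ _ K]) (auto simp: length_element)
  moreover have "\<gamma> t \<in> punct_disk" if "t \<in> {0..<1}" for t
    using in_ball[of t] path(5)[of t] that r by (auto simp: punct_disk_def)
  ultimately show False
    using comp path(1,2) unfolding complete_at_0_def by blast
qed

section \<open>Asymptotics of a pair of Gauss maps\<close>

lemma has_laurent_expansion_logderiv_tendsto:
  fixes f :: "complex \<Rightarrow> complex"
  assumes F: "f has_laurent_expansion F" and F0: "F \<noteq> 0"
  shows "((\<lambda>z. z * deriv f z / f z) \<longlongrightarrow> of_int (fls_subdegree F)) (at 0)"
proof -
  define n where "n = fls_subdegree F"
  define c where "c = fls_nth F n"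
  have c0: "c \<noteq> 0" using F0 by (simp add: c_def n_def)
  have dF: "deriv f has_laurent_expansion fls_deriv F"
    by (rule has_laurent_expansion_deriv[OF F])
  show ?thesis
  proof (cases "n = 0")
    case True
    have "f \<midarrow>0\<rightarrow> c"
      using has_laurent_expansion_imp_tendsto_0[OF F] True by (simp add: c_def n_def)
    moreover have "deriv f \<midarrow>0\<rightarrow> fls_nth (fls_deriv F) 0"
      by (rule has_laurent_expansion_imp_tendsto_0[OF dF])
         (use True n_def fls_deriv_subdegree0 in auto)
    ultimately have "((\<lambda>z. z * deriv f z / f z) \<longlongrightarrow> 0 * fls_nth (fls_deriv F) 0 / c) (at 0)"
      using c0 by (intro tendsto_intros) auto
    then show ?thesis using True by (simp add: n_def)
  next
    case False
    have "f \<sim>[at 0] (\<lambda>z. c * z powi n)"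
      using has_laurent_expansion_imp_asymp_equiv_0[OF F] by (simp add: c_def n_def)
    moreover have "deriv f \<sim>[at 0] (\<lambda>z. (of_int n * c) * z powi (n - 1))"
      using has_laurent_expansion_imp_asymp_equiv_0[OF dF] False
      by (simp add: c_def n_def fls_subdegree_deriv)
    ultimately have "(\<lambda>z. z * deriv f z / f z) \<sim>[at 0]
        (\<lambda>z. z * ((of_int n * c) * z powi (n - 1)) / (c * z powi n))"
      by (intro asymp_equiv_intros)
    also have "\<dots> \<sim>[at 0] (\<lambda>z. of_int n)"
    proof (rule asymp_equiv_refl_ev)
      have "eventually (\<lambda>z::complex. z \<noteq> 0) (at 0)" by (simp add: eventually_at_filter)
      then show "eventually (\<lambda>z. z * ((of_int n * c) * z powi (n - 1)) / (c * z powi n) = of_int n) (at 0)"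
      proof eventually_elim
        case (elim z)
        then have "z * z powi (n - 1) = z powi n"
          by (metis diff_add_cancel power_int_add_1')
        then show ?case using elim c0 by (simp add: field_simps)
      qed
    qed
    finally have "(\<lambda>z. z * deriv f z / f z) \<sim>[at 0] (\<lambda>z. of_int n)" .
    from asymp_equiv_tendsto_transfer[OF asymp_equiv_symI[OF this]] show ?thesis
      by (simp add: n_def)
  qed
qed

lemma fls_subdegree_deriv_nonneg:
  "0 \<le> fls_subdegree (F::complex fls) \<Longrightarrow> 0 \<le> fls_subdegree (fls_deriv F)"
  by (cases "fls_subdegree F = 0") (simp_all add: fls_deriv_subdegree0 fls_subdegree_deriv)

text \<open>\<open>1 + ord F'\<close> equals \<open>ord F\<close> if \<open>ord F < 0\<close> and is positive otherwise; since the
  order of \<open>F - Fs\<close> is then at least the smaller of the two, the hypothesis rules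
  out opposite signs.\<close>

lemma fls_deriv_subdegree_product_pos:
  fixes F Fs :: "complex fls"
  assumes h: "2 * fls_subdegree (F - Fs) = 2 + fls_subdegree (fls_deriv F) + fls_subdegree (fls_deriv Fs)"
  shows "(1 + fls_subdegree (fls_deriv F)) * (1 + fls_subdegree (fls_deriv Fs)) > 0"
proof -
  define n m a b where sd: "n = fls_subdegree F" "m = fls_subdegree Fs"
    "a = fls_subdegree (fls_deriv F)" "b = fls_subdegree (fls_deriv Fs)"
  have a: "n < 0 \<Longrightarrow> a = n - 1" "0 \<le> n \<Longrightarrow> 0 \<le> a"
    by (simp_all add: sd fls_subdegree_deriv fls_subdegree_deriv_nonneg)
  have b: "m < 0 \<Longrightarrow> b = m - 1" "0 \<le> m \<Longrightarrow> 0 \<le> b"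
    by (simp_all add: sd fls_subdegree_deriv fls_subdegree_deriv_nonneg)
  have "fls_subdegree (F - Fs) = m" if "0 \<le> n" "m < 0"
    using that fls_subdegree_diff_eq2[of Fs F] by (force simp: sd)
  moreover have "fls_subdegree (F - Fs) = n" if "n < 0" "0 \<le> m"
    using that fls_subdegree_diff_eq1[of F Fs] by (force simp: sd)
  ultimately have "(1 + a) * (1 + b) > 0"
    using a b h unfolding sd[symmetric]
    by (cases "0 \<le> n"; cases "0 \<le> m") (auto intro: mult_pos_pos mult_neg_neg)
  then show ?thesis by (simp add: sd)
qed

lemma filterlim_of_real_at_right_0: "filterlim complex_of_real (at 0) (at_right 0)"
proof -
  have "(complex_of_real \<longlongrightarrow> of_real 0) (at_right 0)"
    by (intro tendsto_of_real tendsto_ident_at)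
  moreover have "eventually (\<lambda>t. complex_of_real t \<noteq> 0) (at_right 0)"
    by (simp add: eventually_at_right_less eventually_mono[OF eventually_at_right_less])
  ultimately show ?thesis by (simp add: filterlim_at)
qed

lemma tendsto_at_right_of_real:
  "(h \<longlongrightarrow> L) (at (0::complex)) \<Longrightarrow> ((\<lambda>t. h (complex_of_real t)) \<longlongrightarrow> L) (at_right 0)"
  using filterlim_compose[OF _ filterlim_of_real_at_right_0] by blast

lemma eventually_at_right_of_real:
  "eventually P (at (0::complex)) \<Longrightarrow> eventually (\<lambda>t. P (complex_of_real t)) (at_right 0)"
  using eventually_compose_filterlim[OF _ filterlim_of_real_at_right_0] by blast

lemma product_tendsto_at_right:
  fixes \<phi> \<psi> :: "complex \<Rightarrow> complex"
  assumes "0 < r" "\<phi> holomorphic_on ball 0 r" "\<psi> holomorphic_on ball 0 r"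
  shows "((\<lambda>t. C * \<phi> (of_real t) * \<psi> (of_real t)) \<longlongrightarrow> C * \<phi> 0 * \<psi> 0) (at_right 0)"
proof -
  have "isCont \<phi> 0" "isCont \<psi> 0"
    using holomorphic_on_ball_isCont_0[OF assms(1,2)] holomorphic_on_ball_isCont_0[OF assms(1,3)] .
  then have "((\<lambda>z. C * \<phi> z * \<psi> z) \<longlongrightarrow> C * \<phi> 0 * \<psi> 0) (at 0)"
    by (intro tendsto_intros) (auto simp: isCont_def)
  then show ?thesis by (rule tendsto_at_right_of_real)
qed

lemma holomorphic_logderiv_tendsto_0:
  fixes \<phi> :: "complex \<Rightarrow> complex"
  assumes "0 < r" "\<phi> holomorphic_on ball 0 r" "\<phi> 0 \<noteq> 0"
  shows "((\<lambda>z. z * deriv \<phi> z / \<phi> z) \<longlongrightarrow> 0) (at 0)"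
proof -
  have "isCont (deriv \<phi>) 0" "isCont \<phi> 0"
    using holomorphic_on_ball_isCont_0[OF assms(1) holomorphic_deriv[OF assms(2) open_ball]]
      holomorphic_on_ball_isCont_0[OF assms(1,2)] .
  then have "((\<lambda>z. z * deriv \<phi> z / \<phi> z) \<longlongrightarrow> 0 * deriv \<phi> 0 / \<phi> 0) (at 0)"
    using assms(3) by (intro tendsto_intros) (auto simp: isCont_def)
  then show ?thesis by simp
qed

lemma has_laurent_expansion_nonzero_if_at_right:
  assumes "f has_laurent_expansion F" "eventually (\<lambda>t. f (complex_of_real t) \<noteq> 0) (at_right 0)"
  shows "F \<noteq> 0"
proof
  assume "F = 0"
  then have "eventually (\<lambda>t. f (complex_of_real t) = 0) (at_right 0)"
    using assms(1) by (auto simp: has_laurent_expansion_def intro: eventually_at_right_of_real)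
  with assms(2) have "eventually (\<lambda>t::real. False) (at_right 0)"
    by eventually_elim auto
  then show False by simp
qed

lemma has_laurent_expansion_logderiv_tendsto_at_right:
  fixes f :: "complex \<Rightarrow> complex"
  assumes "f has_laurent_expansion F" "eventually (\<lambda>t. f (complex_of_real t) \<noteq> 0) (at_right 0)"
  shows "((\<lambda>t. of_real t * deriv f (of_real t) / f (of_real t)) \<longlongrightarrow> of_int (fls_subdegree F))
           (at_right 0)"
  using tendsto_at_right_of_real[OF has_laurent_expansion_logderiv_tendsto[OF assms(1)
        has_laurent_expansion_nonzero_if_at_right[OF assms]]] .

lemma second_order_identity_tendsto:
  fixes f \<phi> :: "complex \<Rightarrow> complex" and Q :: "real \<Rightarrow> complex" and s r :: real
  assumes F: "f has_laurent_expansion F"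
    and nz: "eventually (\<lambda>t. deriv f (of_real t) \<noteq> 0) (at_right 0)"
    and r: "0 < r" and \<phi>: "\<phi> holomorphic_on ball 0 r" "\<phi> 0 \<noteq> 0"
    and Q: "eventually (\<lambda>t. Q t = (1 + of_real t * deriv (deriv f) (of_real t) / deriv f (of_real t)
           - of_real s - of_real t * deriv \<phi> (of_real t) / \<phi> (of_real t)) / 2) (at_right 0)"
  shows "(Q \<longlongrightarrow> (1 + of_int (fls_subdegree (fls_deriv F)) - of_real s) / 2) (at_right 0)"
proof -
  have "((\<lambda>t. (1 + of_real t * deriv (deriv f) (of_real t) / deriv f (of_real t) - of_real s
          - of_real t * deriv \<phi> (of_real t) / \<phi> (of_real t)) / 2)
        \<longlongrightarrow> (1 + of_int (fls_subdegree (fls_deriv F)) - of_real s - 0) / 2) (at_right 0)"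
    by (intro tendsto_intros has_laurent_expansion_logderiv_tendsto_at_right nz
        has_laurent_expansion_deriv F tendsto_at_right_of_real holomorphic_logderiv_tendsto_0[OF r \<phi>])
       simp
  then have "(Q \<longlongrightarrow> (1 + of_int (fls_subdegree (fls_deriv F)) - of_real s - 0) / 2) (at_right 0)"
    by (rule Lim_transform_eventually) (use Q in \<open>auto elim: eventually_mono\<close>)
  then show ?thesis by simp
qed

lemma logderiv_diff_tendsto_at_right:
  fixes g gs :: "complex \<Rightarrow> complex"
  assumes F: "g has_laurent_expansion F" and Fs: "gs has_laurent_expansion Fs"
    and nz: "eventually (\<lambda>t. g (of_real t) - gs (of_real t) \<noteq> 0) (at_right 0)"
  shows "((\<lambda>t. of_real t * (deriv g (of_real t) - deriv gs (of_real t)) / (g (of_real t) - gs (of_real t)))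
           \<longlongrightarrow> of_int (fls_subdegree (F - Fs))) (at_right 0)"
proof -
  have "(\<lambda>z. g z - gs z) has_laurent_expansion F - Fs"
    by (intro has_laurent_expansion_diff F Fs)
  then have lim: "((\<lambda>t. of_real t * deriv (\<lambda>z. g z - gs z) (of_real t) / (g (of_real t) - gs (of_real t)))
      \<longlongrightarrow> of_int (fls_subdegree (F - Fs))) (at_right 0)"
    using nz by (rule has_laurent_expansion_logderiv_tendsto_at_right)
  obtain R1 R2 where "R1 > 0" "g analytic_on ball 0 R1 - {0}" "R2 > 0" "gs analytic_on ball 0 R2 - {0}"
    using has_laurent_expansion_isolated_0[OF F] has_laurent_expansion_isolated_0[OF Fs]
    unfolding isolated_singularity_at_def by blast
  then obtain R where R: "R > 0" "g analytic_on ball 0 R - {0}" "gs analytic_on ball 0 R - {0}"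
    by (intro that[of "min R1 R2"]) (auto elim!: analytic_on_subset)
  have "eventually (\<lambda>t. 0 < t \<and> t < R) (at_right (0::real))"
    using R(1) by (auto simp: eventually_at_right_field intro!: exI[of _ R])
  then have "eventually (\<lambda>t. of_real t * deriv (\<lambda>z. g z - gs z) (of_real t) / (g (of_real t) - gs (of_real t))
      = of_real t * (deriv g (of_real t) - deriv gs (of_real t)) / (g (of_real t) - gs (of_real t)))
      (at_right 0)"
    by eventually_elim (use R in \<open>auto intro!: deriv_diff analytic_on_imp_differentiable_at\<close>)
  with lim show ?thesis
    by (rule Lim_transform_eventually)
qed

text \<open>The difference of \<open>t g'/(g - g\<^sub>*)\<close> and \<open>t g\<^sub>*'/(g - g\<^sub>*)\<close> is the logarithmic
  derivative of \<open>g - g\<^sub>*\<close>, which ties the three orders together.\<close>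

lemma Gauss_quotient_limits:
  fixes g gs \<phi> \<psi> :: "complex \<Rightarrow> complex" and s r :: real
  assumes F: "g has_laurent_expansion F" and Fs: "gs has_laurent_expansion Fs"
    and r: "0 < r" and \<phi>: "\<phi> holomorphic_on ball 0 r" "\<phi> 0 \<noteq> 0"
    and \<psi>: "\<psi> holomorphic_on ball 0 r" "\<psi> 0 \<noteq> 0"
    and nz: "eventually (\<lambda>t. deriv g (of_real t) \<noteq> 0 \<and> deriv gs (of_real t) \<noteq> 0
                          \<and> g (of_real t) - gs (of_real t) \<noteq> 0) (at_right 0)"
    and id_g: "eventually (\<lambda>t. of_real t * deriv g (of_real t) / (g (of_real t) - gs (of_real t))
       = (1 + of_real t * deriv (deriv g) (of_real t) / deriv g (of_real t) - of_real s
           - of_real t * deriv \<phi> (of_real t) / \<phi> (of_real t)) / 2) (at_right 0)"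
    and id_gs: "eventually (\<lambda>t. of_real t * deriv gs (of_real t) / (g (of_real t) - gs (of_real t))
       = - (1 + of_real t * deriv (deriv gs) (of_real t) / deriv gs (of_real t) - of_real s
           - of_real t * deriv \<psi> (of_real t) / \<psi> (of_real t)) / 2) (at_right 0)"
  defines "a \<equiv> fls_subdegree (fls_deriv F)" and "b \<equiv> fls_subdegree (fls_deriv Fs)"
  shows "((\<lambda>t. of_real t * deriv g (of_real t) / (g (of_real t) - gs (of_real t)))
           \<longlongrightarrow> (1 + of_int a - of_real s) / 2) (at_right 0)"
    and "((\<lambda>t. of_real t * deriv gs (of_real t) / (g (of_real t) - gs (of_real t)))
           \<longlongrightarrow> - (1 + of_int b - of_real s) / 2) (at_right 0)"
    and "2 * real_of_int (fls_subdegree (F - Fs)) = 2 + real_of_int a + real_of_int b - 2 * s"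
proof -
  define T where "T t = of_real t * deriv g (of_real t) / (g (of_real t) - gs (of_real t))" for t
  define Ts where "Ts t = of_real t * deriv gs (of_real t) / (g (of_real t) - gs (of_real t))" for t
  show T: "(T \<longlongrightarrow> (1 + of_int a - of_real s) / 2) (at_right 0)"
    unfolding a_def T_def
    by (rule second_order_identity_tendsto[OF F _ r \<phi> id_g]) (use nz in \<open>auto elim: eventually_mono\<close>)
  have "((\<lambda>t. - Ts t) \<longlongrightarrow> (1 + of_int b - of_real s) / 2) (at_right 0)"
    unfolding b_def Ts_def
    by (rule second_order_identity_tendsto[OF Fs _ r \<psi>]) (use nz id_gs in \<open>auto elim: eventually_mono\<close>)
  from tendsto_minus[OF this] show Ts: "(Ts \<longlongrightarrow> - (1 + of_int b - of_real s) / 2) (at_right 0)"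
    by (simp add: minus_divide_left)
  have "eventually (\<lambda>t. g (of_real t) - gs (of_real t) \<noteq> 0) (at_right 0)"
    using nz by (auto elim: eventually_mono)
  from logderiv_diff_tendsto_at_right[OF F Fs this]
  have "((\<lambda>t. T t - Ts t) \<longlongrightarrow> of_int (fls_subdegree (F - Fs))) (at_right 0)"
    by (simp add: T_def Ts_def diff_divide_distrib right_diff_distrib)
  from tendsto_unique[OF _ this tendsto_diff[OF T Ts]]
  have "complex_of_real (2 * real_of_int (fls_subdegree (F - Fs)))
      = 2 * ((1 + of_int a - of_real s) / 2 - - (1 + of_int b - of_real s) / 2)"
    by simp
  also have "\<dots> = of_real (2 + real_of_int a + real_of_int b - 2 * s)"
    by (simp add: field_simps)
  finally show "2 * real_of_int (fls_subdegree (F - Fs)) = 2 + real_of_int a + real_of_int b - 2 * s"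
    by (simp only: of_real_eq_iff)
qed

lemma tendsto_powr_times_imp_exponent_nonneg:
  fixes f M :: "real \<Rightarrow> complex" and e :: real
  assumes f: "(f \<longlongrightarrow> L) (at_right 0)" and M: "(M \<longlongrightarrow> m) (at_right 0)" "m \<noteq> 0"
    and eq: "eventually (\<lambda>t. f t = of_real (t powr e) * M t) (at_right 0)"
  shows "0 \<le> e"
proof (rule ccontr)
  assume "\<not> 0 \<le> e"
  then have "((\<lambda>t::real. t powr (- e)) \<longlongrightarrow> 0) (at_right 0)"
    by (intro tendsto_zero_powrI tendsto_ident_at)
       (auto intro: eventually_mono[OF eventually_at_right_less])
  with f have "((\<lambda>t. f t * of_real (t powr (- e))) \<longlongrightarrow> L * of_real 0) (at_right 0)"
    by (intro tendsto_intros)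
  moreover have "eventually (\<lambda>t. f t * of_real (t powr (- e)) = M t) (at_right 0)"
    using eq eventually_at_right_less
  proof eventually_elim
    case (elim t)
    then have "(of_real (t powr e) :: complex) * of_real (t powr (- e)) = 1"
      by (simp flip: of_real_mult powr_add)
    then show ?case using elim(1) by (simp add: algebra_simps)
  qed
  ultimately have "(M \<longlongrightarrow> 0) (at_right 0)"
    by (simp add: Lim_transform_eventually)
  with M show False
    using tendsto_unique[of "at_right (0::real)" M] by fastforce
qed

lemma Gauss_pair_hopf_limit:
  fixes g gs \<phi> \<psi> :: "complex \<Rightarrow> complex" and s r :: real and C :: complex
  assumes F: "g has_laurent_expansion F" and Fs: "gs has_laurent_expansion Fs"
    and r: "0 < r" and \<phi>: "\<phi> holomorphic_on ball 0 r" "\<phi> 0 \<noteq> 0"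
    and \<psi>: "\<psi> holomorphic_on ball 0 r" "\<psi> 0 \<noteq> 0" and "C \<noteq> 0"
    and id_g: "eventually (\<lambda>t. of_real t * deriv g (of_real t) / (g (of_real t) - gs (of_real t))
       = (1 + of_real t * deriv (deriv g) (of_real t) / deriv g (of_real t) - of_real s
           - of_real t * deriv \<phi> (of_real t) / \<phi> (of_real t)) / 2) (at_right 0)"
    and id_gs: "eventually (\<lambda>t. of_real t * deriv gs (of_real t) / (g (of_real t) - gs (of_real t))
       = - (1 + of_real t * deriv (deriv gs) (of_real t) / deriv gs (of_real t) - of_real s
           - of_real t * deriv \<psi> (of_real t) / \<psi> (of_real t)) / 2) (at_right 0)"
    and id_prod: "eventually (\<lambda>t. - (of_real t * deriv g (of_real t)) * (of_real t * deriv gs (of_real t))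
       / (g (of_real t) - gs (of_real t))\<^sup>2 = of_real (t powr (2 * s)) * (C * \<phi> (of_real t) * \<psi> (of_real t)))
       (at_right 0)"
  defines "a \<equiv> fls_subdegree (fls_deriv F)" and "b \<equiv> fls_subdegree (fls_deriv Fs)"
  shows "((\<lambda>t. of_real (t powr (2 * s)) * (C * \<phi> (of_real t) * \<psi> (of_real t)))
           \<longlongrightarrow> (1 + of_int a - of_real s) * (1 + of_int b - of_real s) / 4) (at_right 0)"
    and "2 * real_of_int (fls_subdegree (F - Fs)) = 2 + real_of_int a + real_of_int b - 2 * s"
proof -
  define T where "T t = of_real t * deriv g (of_real t) / (g (of_real t) - gs (of_real t))" for t
  define Ts where "Ts t = of_real t * deriv gs (of_real t) / (g (of_real t) - gs (of_real t))" for t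
  have prod: "eventually (\<lambda>t. - (T t * Ts t) = of_real (t powr (2 * s)) * (C * \<phi> (of_real t) * \<psi> (of_real t)))
      (at_right 0)"
    using id_prod by eventually_elim (simp add: T_def Ts_def power2_eq_square)
  have "C * \<phi> 0 * \<psi> 0 \<noteq> 0" using \<phi> \<psi> \<open>C \<noteq> 0\<close> by simp
  from tendsto_imp_eventually_ne[OF product_tendsto_at_right[OF r \<phi>(1) \<psi>(1)] this]
  have "eventually (\<lambda>t. C * \<phi> (of_real t) * \<psi> (of_real t) \<noteq> 0) (at_right 0)" .
  with prod eventually_at_right_less have "eventually (\<lambda>t. deriv g (of_real t) \<noteq> 0
      \<and> deriv gs (of_real t) \<noteq> 0 \<and> g (of_real t) - gs (of_real t) \<noteq> 0) (at_right 0)"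
    by eventually_elim (auto simp: T_def Ts_def)
  note lim = Gauss_quotient_limits[OF F Fs r \<phi> \<psi> this id_g id_gs, folded a_def b_def T_def Ts_def]
  have "((\<lambda>t. - (T t * Ts t)) \<longlongrightarrow> - ((1 + of_int a - of_real s) / 2 * (- (1 + of_int b - of_real s) / 2)))
      (at_right 0)"
    by (intro tendsto_intros lim)
  then show "((\<lambda>t. of_real (t powr (2 * s)) * (C * \<phi> (of_real t) * \<psi> (of_real t)))
      \<longlongrightarrow> (1 + of_int a - of_real s) * (1 + of_int b - of_real s) / 4) (at_right 0)"
    by (rule Lim_transform_eventually[OF _ prod, THEN tendsto_eq_rhs]) (simp add: field_simps)
  show "2 * real_of_int (fls_subdegree (F - Fs)) = 2 + real_of_int a + real_of_int b - 2 * s"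
    by (rule lim(3))
qed

lemma Gauss_pair_asymptotics:
  fixes g gs \<phi> \<psi> :: "complex \<Rightarrow> complex" and s r :: real and C :: complex
  assumes F: "g has_laurent_expansion F" and Fs: "gs has_laurent_expansion Fs"
    and r: "0 < r" and \<phi>: "\<phi> holomorphic_on ball 0 r" "\<phi> 0 \<noteq> 0"
    and \<psi>: "\<psi> holomorphic_on ball 0 r" "\<psi> 0 \<noteq> 0"
    and "C \<noteq> 0" and "s \<le> 0"
    and id_g: "eventually (\<lambda>t. of_real t * deriv g (of_real t) / (g (of_real t) - gs (of_real t))
       = (1 + of_real t * deriv (deriv g) (of_real t) / deriv g (of_real t) - of_real s
           - of_real t * deriv \<phi> (of_real t) / \<phi> (of_real t)) / 2) (at_right 0)"
    and id_gs: "eventually (\<lambda>t. of_real t * deriv gs (of_real t) / (g (of_real t) - gs (of_real t))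
       = - (1 + of_real t * deriv (deriv gs) (of_real t) / deriv gs (of_real t) - of_real s
           - of_real t * deriv \<psi> (of_real t) / \<psi> (of_real t)) / 2) (at_right 0)"
    and id_prod: "eventually (\<lambda>t. - (of_real t * deriv g (of_real t)) * (of_real t * deriv gs (of_real t))
       / (g (of_real t) - gs (of_real t))\<^sup>2 = of_real (t powr (2 * s)) * (C * \<phi> (of_real t) * \<psi> (of_real t)))
       (at_right 0)"
  shows "s = 0 \<and> (\<exists>q>0. C * \<phi> 0 * \<psi> 0 = of_real q)"
proof -
  define a where "a = fls_subdegree (fls_deriv F)"
  define b where "b = fls_subdegree (fls_deriv Fs)"
  define L where "L = (1 + of_int a - of_real s) * (1 + of_int b - of_real s) / (4 :: complex)"
  note lim = Gauss_pair_hopf_limit[OF F Fs r \<phi> \<psi> \<open>C \<noteq> 0\<close> id_g id_gs id_prod, folded a_def b_def L_def]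
  have M: "((\<lambda>t. C * \<phi> (of_real t) * \<psi> (of_real t)) \<longlongrightarrow> C * \<phi> 0 * \<psi> 0) (at_right 0)"
    and M_nz: "C * \<phi> 0 * \<psi> 0 \<noteq> 0"
    using product_tendsto_at_right[OF r \<phi>(1) \<psi>(1)] \<phi> \<psi> \<open>C \<noteq> 0\<close> by simp_all
  have "0 \<le> 2 * s"
    by (rule tendsto_powr_times_imp_exponent_nonneg[OF lim(1) M M_nz]) simp
  with \<open>s \<le> 0\<close> have s: "s = 0" by simp
  have "eventually (\<lambda>t. of_real (t powr (2 * s)) * (C * \<phi> (of_real t) * \<psi> (of_real t))
      = C * \<phi> (of_real t) * \<psi> (of_real t)) (at_right 0)"
    using eventually_at_right_less by eventually_elim (simp add: s)
  from tendsto_unique[OF _ M Lim_transform_eventually[OF lim(1) this]]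
  have "C * \<phi> 0 * \<psi> 0 = of_real (real_of_int ((1 + a) * (1 + b)) / 4)"
    using s by (simp add: L_def field_simps)
  moreover have "(1 + a) * (1 + b) > 0"
    using lim(2) s by (intro fls_deriv_subdegree_product_pos[of F Fs, folded a_def b_def]) linarith
  then have "real_of_int ((1 + a) * (1 + b)) / 4 > 0"
    by (simp only: of_int_pos divide_pos_pos zero_less_numeral)
  ultimately show ?thesis
    using s by blast
qed

section \<open>Cylindrical ends\<close>

locale cylindrical_end =
  fixes E :: "complex \<Rightarrow> complex^2^2" and om th \<phi> \<psi> :: "complex \<Rightarrow> complex"
    and c c' :: complex and s r :: real
  assumes flat: "flat_front E om th"
    and r: "0 < r" "r \<le> 1"
    and \<phi>_hol: "\<phi> holomorphic_on ball 0 r" and \<psi>_hol: "\<psi> holomorphic_on ball 0 r"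
    and \<phi>_nz: "\<forall>z\<in>ball 0 r. \<phi> z \<noteq> 0" and \<psi>_nz: "\<forall>z\<in>ball 0 r. \<psi> z \<noteq> 0"
    and om_rep: "\<forall>w. Re w < ln r \<longrightarrow> om w = c * exp (of_real s * w) * \<phi> (exp w)"
    and th_rep: "\<forall>w. Re w < ln r \<longrightarrow> th w = c' * exp (of_real s * w) * \<psi> (exp w)"
    and c_nz: "c \<noteq> 0" "c' \<noteq> 0"
begin

definition G :: "complex \<Rightarrow> complex" where "G z = hypGauss E (Ln z)"

definition Gs :: "complex \<Rightarrow> complex" where "Gs z = hypGauss_star E (Ln z)"

lemma exp_in_ball: "Re w < ln r \<Longrightarrow> exp w \<in> ball 0 r"
  by (rule exp_in_ball_of_Re_less_ln[OF r(1)])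

lemma in_left_half_plane: "Re w < ln r \<Longrightarrow> w \<in> left_half_plane"
  using r by (auto simp: left_half_plane_def intro: order.strict_trans2)

lemma om_nz: "Re w < ln r \<Longrightarrow> om w \<noteq> 0" and th_nz: "Re w < ln r \<Longrightarrow> th w \<noteq> 0"
  using om_rep th_rep \<phi>_nz \<psi>_nz exp_in_ball c_nz by auto

lemma om_deriv: "Re w < ln r \<Longrightarrow>
    (om has_field_derivative om w * (of_real s + exp w * deriv \<phi> (exp w) / \<phi> (exp w))) (at w)"
  using \<phi>_nz exp_in_ball by (intro has_field_derivative_exp_power_rep[OF r(1) \<phi>_hol om_rep]) auto

lemma th_deriv: "Re w < ln r \<Longrightarrow>
    (th has_field_derivative th w * (of_real s + exp w * deriv \<psi> (exp w) / \<psi> (exp w))) (at w)"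
  using \<psi>_nz exp_in_ball by (intro has_field_derivative_exp_power_rep[OF r(1) \<psi>_hol th_rep]) auto

context
  fixes \<rho> :: real
  assumes \<rho>: "0 < \<rho>" "\<rho> \<le> r"
    and G_hol: "G holomorphic_on ball 0 \<rho> - {0}" and Gs_hol: "Gs holomorphic_on ball 0 \<rho> - {0}"
begin

lemma log_slit_disk_Re_less: "w \<in> log_slit_disk \<rho> \<Longrightarrow> Re w < ln r"
  using \<rho> by (auto simp: log_slit_disk_def intro: order.strict_trans2)

lemma G_exp: "w \<in> log_slit_disk \<rho> \<Longrightarrow> G (exp w) = E w $ 1 $ 1 / E w $ 2 $ 1"
  and Gs_exp: "w \<in> log_slit_disk \<rho> \<Longrightarrow> Gs (exp w) = E w $ 1 $ 2 / E w $ 2 $ 2"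
  using log_slit_disk_D(1)[OF _ \<rho>(1)] by (simp_all add: G_def Gs_def hypGauss_def hypGauss_star_def)

lemma isCont_comp_exp:
  assumes "f holomorphic_on ball 0 \<rho> - {0}" "w \<in> log_slit_disk \<rho>"
  shows "isCont (\<lambda>v. f (exp v)) w"
  using DERIV_isCont[OF has_field_derivative_comp_exp[OF assms(1)]] log_slit_disk_D(2)[OF assms(2) \<rho>(1)]
  by auto

text \<open>\<open>E\<^sub>2\<^sub>1\<close> and \<open>E\<^sub>2\<^sub>2\<close> cannot vanish: at such a zero the numerator of the continuous Gauss map
  would vanish too, contradicting \<open>det E = 1\<close>.\<close>

lemma Gauss_denominators_nonzero:
  assumes w: "w \<in> log_slit_disk \<rho>"
  shows "E w $ 2 $ 1 \<noteq> 0" and "E w $ 2 $ 2 \<noteq> 0"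
proof -
  have wL: "w \<in> left_half_plane" and wr: "Re w < ln r"
    using log_slit_disk_Re_less[OF w] in_left_half_plane by auto
  note ode = flat_front_ode[OF flat wL]
  have near: "eventually (\<lambda>v. v \<in> log_slit_disk \<rho>) (at w)"
    by (rule eventually_at_in_open'[OF open_log_slit_disk w])
  show "E w $ 2 $ 1 \<noteq> 0"
  proof
    assume z: "E w $ 2 $ 1 = 0"
    with ode(5) have "E w $ 1 $ 1 * E w $ 2 $ 2 = 1" by simp
    moreover have "E w $ 1 $ 1 = 0"
    proof (rule numerator_zero_of_continuous_quotient[OF ode(2) _ z])
      show "E w $ 2 $ 2 * om w \<noteq> 0" using \<open>E w $ 1 $ 1 * E w $ 2 $ 2 = 1\<close> om_nz[OF wr] by auto
      show "isCont (\<lambda>v. E v $ 1 $ 1) w" by (rule DERIV_isCont[OF ode(1)])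
      show "isCont (\<lambda>v. G (exp v)) w" by (rule isCont_comp_exp[OF G_hol w])
      show "eventually (\<lambda>v. E v $ 2 $ 1 \<noteq> 0 \<longrightarrow> G (exp v) = E v $ 1 $ 1 / E v $ 2 $ 1) (at w)"
        using near by eventually_elim (simp add: G_exp)
    qed
    ultimately show False by simp
  qed
  show "E w $ 2 $ 2 \<noteq> 0"
  proof
    assume z: "E w $ 2 $ 2 = 0"
    with ode(5) have "E w $ 1 $ 2 * E w $ 2 $ 1 = -1" by (simp add: minus_equation_iff)
    moreover have "E w $ 1 $ 2 = 0"
    proof (rule numerator_zero_of_continuous_quotient[OF ode(4) _ z])
      show "E w $ 2 $ 1 * th w \<noteq> 0" using \<open>E w $ 1 $ 2 * E w $ 2 $ 1 = -1\<close> th_nz[OF wr] by auto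
      show "isCont (\<lambda>v. E v $ 1 $ 2) w" by (rule DERIV_isCont[OF ode(3)])
      show "isCont (\<lambda>v. Gs (exp v)) w" by (rule isCont_comp_exp[OF Gs_hol w])
      show "eventually (\<lambda>v. E v $ 2 $ 2 \<noteq> 0 \<longrightarrow> Gs (exp v) = E v $ 1 $ 2 / E v $ 2 $ 2) (at w)"
        using near by eventually_elim (simp add: Gs_exp)
    qed
    ultimately show False by simp
  qed
qed

lemma Gauss_first_derivatives:
  assumes w: "w \<in> log_slit_disk \<rho>"
  shows "exp w * deriv G (exp w) = - om w / (E w $ 2 $ 1)\<^sup>2"
    and "exp w * deriv Gs (exp w) = th w / (E w $ 2 $ 2)\<^sup>2"
    and "G (exp w) - Gs (exp w) = 1 / (E w $ 2 $ 1 * E w $ 2 $ 2)"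
proof -
  have wL: "w \<in> left_half_plane"
    using log_slit_disk_Re_less[OF w] in_left_half_plane by auto
  note ode = flat_front_ode[OF flat wL]
  note nz = Gauss_denominators_nonzero[OF w]
  have x: "exp w \<in> ball 0 \<rho> - {0}" by (rule log_slit_disk_D(2)[OF w \<rho>(1)])
  have op: "open (ball 0 \<rho> - {0::complex})" by auto
  have dG: "((\<lambda>v. E v $ 1 $ 1 / E v $ 2 $ 1) has_field_derivative - om w / (E w $ 2 $ 1)\<^sup>2) (at w)"
    by (rule DERIV_cong[OF DERIV_divide[OF ode(1,2) nz(1)]])
       (use ode(5) nz in \<open>simp add: power2_eq_square algebra_simps\<close>)
  show "exp w * deriv G (exp w) = - om w / (E w $ 2 $ 1)\<^sup>2"
    using DERIV_unique_on_open[OF has_field_derivative_comp_exp[OF G_hol op x] dG open_log_slit_disk w]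
    by (simp add: G_exp)
  have dGs: "((\<lambda>v. E v $ 1 $ 2 / E v $ 2 $ 2) has_field_derivative th w / (E w $ 2 $ 2)\<^sup>2) (at w)"
    by (rule DERIV_cong[OF DERIV_divide[OF ode(3,4) nz(2)]])
       (use ode(5) nz in \<open>simp add: power2_eq_square algebra_simps\<close>)
  show "exp w * deriv Gs (exp w) = th w / (E w $ 2 $ 2)\<^sup>2"
    using DERIV_unique_on_open[OF has_field_derivative_comp_exp[OF Gs_hol op x] dGs open_log_slit_disk w]
    by (simp add: Gs_exp)
  show "G (exp w) - Gs (exp w) = 1 / (E w $ 2 $ 1 * E w $ 2 $ 2)"
    using ode(5) nz by (simp add: G_exp[OF w] Gs_exp[OF w] field_simps)
qed

lemma Gauss_second_order_identity:
  assumes w: "w \<in> log_slit_disk \<rho>" and x: "exp w = x"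
  shows "x * deriv G x / (G x - Gs x)
           = (1 + x * deriv (deriv G) x / deriv G x - of_real s - x * deriv \<phi> x / \<phi> x) / 2"
proof -
  have wr: "Re w < ln r" by (rule log_slit_disk_Re_less[OF w])
  note ode = flat_front_ode[OF flat in_left_half_plane[OF wr]]
  note nz = Gauss_denominators_nonzero[OF w] om_nz[OF wr]
  note first = Gauss_first_derivatives[OF w, unfolded x]
  define L where "L = of_real s + x * deriv \<phi> x / \<phi> x"
  have "((\<lambda>v. - om v) has_field_derivative - om w * L) (at w)"
    using DERIV_minus[OF om_deriv[OF wr]] by (simp add: L_def x)
  moreover have "((\<lambda>v. E v $ 2 $ 1) has_field_derivative - E w $ 2 $ 2 * - om w) (at w)"
    using ode(2) by simp
  ultimately have "((\<lambda>v. - om v / (E v $ 2 $ 1)\<^sup>2) has_field_derivative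
      - om w / (E w $ 2 $ 1)\<^sup>2 * (L - 2 * E w $ 2 $ 2 * om w / E w $ 2 $ 1)) (at w)"
    using has_field_derivative_divide_square[of "\<lambda>v. - om v"] nz by fastforce
  then have "x * deriv (deriv G) x / deriv G x = L - 2 * E w $ 2 $ 2 * om w / E w $ 2 $ 1 - 1"
    using logderiv_deriv_in_exp_chart[OF G_hol _ log_slit_disk_D(2)[OF w \<rho>(1)] open_log_slit_disk w]
      Gauss_first_derivatives(1) nz x by force
  moreover have "x * deriv G x / (G x - Gs x) = - E w $ 2 $ 2 * om w / E w $ 2 $ 1"
    unfolding first using nz by (simp add: field_simps power2_eq_square)
  ultimately show ?thesis
    unfolding L_def by (simp add: field_simps)
qed

lemma Gauss_star_second_order_identity:
  assumes w: "w \<in> log_slit_disk \<rho>" and x: "exp w = x"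
  shows "x * deriv Gs x / (G x - Gs x)
           = - (1 + x * deriv (deriv Gs) x / deriv Gs x - of_real s - x * deriv \<psi> x / \<psi> x) / 2"
proof -
  have wr: "Re w < ln r" by (rule log_slit_disk_Re_less[OF w])
  note ode = flat_front_ode[OF flat in_left_half_plane[OF wr]]
  note nz = Gauss_denominators_nonzero[OF w] th_nz[OF wr]
  note first = Gauss_first_derivatives[OF w, unfolded x]
  define L where "L = of_real s + x * deriv \<psi> x / \<psi> x"
  have "((\<lambda>v. th v / (E v $ 2 $ 2)\<^sup>2) has_field_derivative
      th w / (E w $ 2 $ 2)\<^sup>2 * (L - 2 * E w $ 2 $ 1 * th w / E w $ 2 $ 2)) (at w)"
    using has_field_derivative_divide_square[OF th_deriv[OF wr] ode(4)] nz
    by (simp add: L_def x)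
  then have "x * deriv (deriv Gs) x / deriv Gs x = L - 2 * E w $ 2 $ 1 * th w / E w $ 2 $ 2 - 1"
    using logderiv_deriv_in_exp_chart[OF Gs_hol _ log_slit_disk_D(2)[OF w \<rho>(1)] open_log_slit_disk w]
      Gauss_first_derivatives(2) nz x by force
  moreover have "x * deriv Gs x / (G x - Gs x) = E w $ 2 $ 1 * th w / E w $ 2 $ 2"
    unfolding first using nz by (simp add: field_simps power2_eq_square)
  ultimately show ?thesis
    unfolding L_def by (simp add: field_simps)
qed

end

lemma Gauss_maps_holomorphic_near_0:
  assumes "G has_laurent_expansion F" "Gs has_laurent_expansion Fs"
  obtains \<rho> where "0 < \<rho>" "\<rho> \<le> r"
    "G holomorphic_on ball 0 \<rho> - {0}" "Gs holomorphic_on ball 0 \<rho> - {0}"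
proof -
  obtain R1 R2 where "R1 > 0" "G analytic_on ball 0 R1 - {0}" "R2 > 0" "Gs analytic_on ball 0 R2 - {0}"
    using has_laurent_expansion_isolated_0[OF assms(1)] has_laurent_expansion_isolated_0[OF assms(2)]
    unfolding isolated_singularity_at_def by blast
  then show ?thesis
    using r by (intro that[of "min (min R1 R2) r"])
      (auto intro!: analytic_imp_holomorphic elim!: analytic_on_subset)
qed

lemma om_th_real_axis:
  assumes "0 < t" "t < r"
  shows "om (of_real (ln t)) * th (of_real (ln t))
    = of_real (t powr (2 * s)) * (c * c' * \<phi> (of_real t) * \<psi> (of_real t))"
proof -
  have "Re (of_real (ln t)) < ln r" using assms by simp
  moreover have "exp (of_real s * of_real (ln t)) = (of_real (t powr s) :: complex)"
    using assms(1) by (simp add: powr_def flip: of_real_mult exp_of_real)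
  moreover have "(of_real (t powr (2 * s)) :: complex) = of_real (t powr s) * of_real (t powr s)"
    by (simp flip: powr_add of_real_mult)
  ultimately show ?thesis
    using om_rep th_rep exp_of_real_ln[OF assms(1)] by (simp add: algebra_simps)
qed

lemma regular_end_exponent_zero:
  assumes "regular_end E" and "s \<le> 0"
  shows "s = 0 \<and> (\<exists>q>0. c * c' * \<phi> 0 * \<psi> 0 = of_real q)"
proof -
  obtain F Fs where F: "G has_laurent_expansion F" and Fs: "Gs has_laurent_expansion Fs"
    using assms(1) unfolding regular_end_def meromorphic_on_def G_def[abs_def] Gs_def[abs_def]
    by auto
  obtain \<rho> where \<rho>: "0 < \<rho>" "\<rho> \<le> r"
    and hol: "G holomorphic_on ball 0 \<rho> - {0}" "Gs holomorphic_on ball 0 \<rho> - {0}"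
    using Gauss_maps_holomorphic_near_0[OF F Fs] by blast
  have near: "eventually (\<lambda>t. 0 < t \<and> t < \<rho>) (at_right (0::real))"
    using \<rho>(1) by (auto simp: eventually_at_right_field intro!: exI[of _ \<rho>])
  have slit: "complex_of_real (ln t) \<in> log_slit_disk \<rho>" "exp (complex_of_real (ln t)) = of_real t"
    if "0 < t" "t < \<rho>" for t
    using that by (simp_all add: ln_in_log_slit_disk exp_of_real_ln)
  note second = Gauss_second_order_identity[OF \<rho> hol slit] Gauss_star_second_order_identity[OF \<rho> hol slit]
  have prod: "- (of_real t * deriv G (of_real t)) * (of_real t * deriv Gs (of_real t))
      / (G (of_real t) - Gs (of_real t))\<^sup>2
      = of_real (t powr (2 * s)) * (c * c' * \<phi> (of_real t) * \<psi> (of_real t))" if "0 < t" "t < \<rho>" for t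
  proof -
    note first = Gauss_first_derivatives[OF \<rho> hol slit(1)[OF that], unfolded slit(2)[OF that]]
    have "- (of_real t * deriv G (of_real t)) * (of_real t * deriv Gs (of_real t))
        / (G (of_real t) - Gs (of_real t))\<^sup>2 = om (of_real (ln t)) * th (of_real (ln t))"
      unfolding first using Gauss_denominators_nonzero[OF \<rho> hol slit(1)[OF that]]
      by (simp add: field_simps power2_eq_square)
    then show ?thesis
      using om_th_real_axis that \<rho> by simp
  qed
  show ?thesis
  proof (rule Gauss_pair_asymptotics[OF F Fs r(1) \<phi>_hol _ \<psi>_hol _ _ assms(2)])
    show "\<phi> 0 \<noteq> 0" "\<psi> 0 \<noteq> 0" "c * c' \<noteq> 0"
      using \<phi>_nz \<psi>_nz c_nz r(1) by auto
  qed (use near second prod in \<open>auto elim!: eventually_mono\<close>)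
qed

lemma hopf_coeff_tendsto:
  assumes "s = 0"
  shows "((\<lambda>z. z\<^sup>2 * hopf_coeff om th z) \<longlongrightarrow> c * c' * \<phi> 0 * \<psi> 0) (at 0)"
proof -
  have "isCont \<phi> 0" "isCont \<psi> 0"
    using holomorphic_on_ball_isCont_0[OF r(1) \<phi>_hol] holomorphic_on_ball_isCont_0[OF r(1) \<psi>_hol] .
  then have "((\<lambda>z. c * c' * \<phi> z * \<psi> z) \<longlongrightarrow> c * c' * \<phi> 0 * \<psi> 0) (at 0)"
    by (intro tendsto_intros) (auto simp: isCont_def)
  moreover have "eventually (\<lambda>z. z \<in> ball 0 r - {0}) (at (0::complex))"
    using eventually_at_ball'[OF r(1), of 0 UNIV] by (auto elim: eventually_mono)
  then have "eventually (\<lambda>z. c * c' * \<phi> z * \<psi> z = z\<^sup>2 * hopf_coeff om th z) (at 0)"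
  proof eventually_elim
    case (elim z)
    then have "Re (Ln z) < ln r" using r(1) by (simp add: Re_Ln)
    then show ?case
      using elim om_rep th_rep assms by (simp add: hopf_coeff_def)
  qed
  ultimately show ?thesis by (rule Lim_transform_eventually)
qed

end

lemma cylindrical_common_rep:
  assumes "cylindrical om th"
  obtains \<mu> r \<phi> \<psi> where "0 < r" "r \<le> 1"
    "\<phi> holomorphic_on ball 0 r" "\<forall>z\<in>ball 0 r. \<phi> z \<noteq> 0"
    "\<psi> holomorphic_on ball 0 r" "\<forall>z\<in>ball 0 r. \<psi> z \<noteq> 0"
    "\<forall>z\<in>ball 0 r - {0}. metric_coeff om z = cmod z powr (2 * \<mu>) * (cmod (\<phi> z))\<^sup>2"
    "\<forall>z\<in>ball 0 r - {0}. metric_coeff th z = cmod z powr (2 * \<mu>) * (cmod (\<psi> z))\<^sup>2"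
proof -
  have nonvanishing: "\<exists>d>0. \<forall>z\<in>ball 0 d. f z \<noteq> 0"
    if "f holomorphic_on ball 0 R" "0 < R" "f 0 \<noteq> 0" for f :: "complex \<Rightarrow> complex" and R
  proof -
    have "isCont f 0"
      by (rule holomorphic_on_ball_isCont_0[OF that(2,1)])
    then show ?thesis
      using continuous_at_avoid[of 0 f 0] that(3) by (auto simp: dist_commute)
  qed
  obtain \<mu> r1 \<phi> r2 \<psi> where
    \<phi>: "r1 > 0" "\<phi> holomorphic_on ball 0 r1" "\<phi> 0 \<noteq> 0"
      "\<forall>z\<in>ball 0 r1 - {0}. metric_coeff om z = cmod z powr (2 * \<mu>) * (cmod (\<phi> z))\<^sup>2"
    and \<psi>: "r2 > 0" "\<psi> holomorphic_on ball 0 r2" "\<psi> 0 \<noteq> 0"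
      "\<forall>z\<in>ball 0 r2 - {0}. metric_coeff th z = cmod z powr (2 * \<mu>) * (cmod (\<psi> z))\<^sup>2"
    using assms unfolding cylindrical_def has_ord0_def by blast
  obtain d1 d2 where "d1 > 0" "\<forall>z\<in>ball 0 d1. \<phi> z \<noteq> 0" "d2 > 0" "\<forall>z\<in>ball 0 d2. \<psi> z \<noteq> 0"
    using nonvanishing[OF \<phi>(2,1,3)] nonvanishing[OF \<psi>(2,1,3)] by blast
  define r where "r = Min {r1, r2, d1, d2, 1}"
  have r: "0 < r" "r \<le> 1" and sub: "ball 0 r \<subseteq> ball 0 r1" "ball 0 r \<subseteq> ball 0 r2"
    "ball 0 r \<subseteq> ball 0 d1" "ball 0 r \<subseteq> ball 0 d2"
    using \<phi>(1) \<psi>(1) \<open>d1 > 0\<close> \<open>d2 > 0\<close> by (auto simp: r_def)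
  show ?thesis
  proof (rule that[OF r])
    show "\<phi> holomorphic_on ball 0 r" "\<psi> holomorphic_on ball 0 r"
      using holomorphic_on_subset[OF \<phi>(2) sub(1)] holomorphic_on_subset[OF \<psi>(2) sub(2)] .
  qed (use \<phi>(4) \<psi>(4) sub \<open>\<forall>z\<in>ball 0 d1. \<phi> z \<noteq> 0\<close> \<open>\<forall>z\<in>ball 0 d2. \<psi> z \<noteq> 0\<close> in blast)+
qed

lemma cylindrical_flat_front_rep:
  assumes "flat_front E om th" "cylindrical om th"
  obtains \<mu> r \<phi> \<psi> c c' where "cylindrical_end E om th \<phi> \<psi> c c' (\<mu> + 1) r"
    "\<forall>z\<in>ball 0 r - {0}. metric_coeff om z = cmod z powr (2 * \<mu>) * (cmod (\<phi> z))\<^sup>2"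
    "\<forall>z\<in>ball 0 r - {0}. metric_coeff th z = cmod z powr (2 * \<mu>) * (cmod (\<psi> z))\<^sup>2"
proof -
  obtain \<mu> r \<phi> \<psi> where r: "0 < r" "r \<le> 1"
    and \<phi>: "\<phi> holomorphic_on ball 0 r" "\<forall>z\<in>ball 0 r. \<phi> z \<noteq> 0"
    and \<psi>: "\<psi> holomorphic_on ball 0 r" "\<forall>z\<in>ball 0 r. \<psi> z \<noteq> 0"
    and eq_om: "\<forall>z\<in>ball 0 r - {0}. metric_coeff om z = cmod z powr (2 * \<mu>) * (cmod (\<phi> z))\<^sup>2"
    and eq_th: "\<forall>z\<in>ball 0 r - {0}. metric_coeff th z = cmod z powr (2 * \<mu>) * (cmod (\<psi> z))\<^sup>2"
    by (rule cylindrical_common_rep[OF assms(2)])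
  have hol: "om holomorphic_on left_half_plane" "th holomorphic_on left_half_plane"
    using assms(1) unfolding flat_front_def by auto
  obtain c c' where "cmod c = 1" "cmod c' = 1"
    and "\<forall>w. Re w < ln r \<longrightarrow> om w = c * exp (of_real (\<mu> + 1) * w) * \<phi> (exp w)"
    and "\<forall>w. Re w < ln r \<longrightarrow> th w = c' * exp (of_real (\<mu> + 1) * w) * \<psi> (exp w)"
    using metric_coeff_ord0_lift[OF hol(1) r \<phi> eq_om] metric_coeff_ord0_lift[OF hol(2) r \<psi> eq_th]
    by blast
  then have "cylindrical_end E om th \<phi> \<psi> c c' (\<mu> + 1) r"
    using assms(1) r \<phi> \<psi> by unfold_locales auto
  then show ?thesis using eq_om eq_th by (rule that)
qed

theorem corollary1p18:
  fixes E :: "complex \<Rightarrow> complex^2^2" and om th :: "complex \<Rightarrow> complex"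
  assumes "flat_front E om th"
    and "regular_WCF_end E om th"
    and "cylindrical om th"
  shows "(\<exists>q::real. q > 0 \<and> ((\<lambda>z. z\<^sup>2 * hopf_coeff om th z) \<longlongrightarrow> complex_of_real q) (at 0))
         \<and> has_ord0 (metric_coeff om) (-1) \<and> has_ord0 (metric_coeff th) (-1)"
proof -
  have reg: "regular_end E" and comp: "complete_at_0 om th"
    using assms(2) unfolding regular_WCF_end_def WCF_end_def by auto
  obtain \<mu> r \<phi> \<psi> c c' where end_rep: "cylindrical_end E om th \<phi> \<psi> c c' (\<mu> + 1) r"
    and eq_om: "\<forall>z\<in>ball 0 r - {0}. metric_coeff om z = cmod z powr (2 * \<mu>) * (cmod (\<phi> z))\<^sup>2"
    and eq_th: "\<forall>z\<in>ball 0 r - {0}. metric_coeff th z = cmod z powr (2 * \<mu>) * (cmod (\<psi> z))\<^sup>2"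
    using cylindrical_flat_front_rep[OF assms(1,3)] .
  interpret cylindrical_end E om th \<phi> \<psi> c c' "\<mu> + 1" r by (fact end_rep)
  have "\<mu> \<le> -1"
    using complete_at_0_imp_ord0_le[OF comp r _ _ eq_om eq_th] \<phi>_hol \<psi>_hol
    by (simp add: holomorphic_on_imp_continuous_on)
  then obtain q where "\<mu> = -1" "q > 0" "c * c' * \<phi> 0 * \<psi> 0 = of_real q"
    using regular_end_exponent_zero[OF reg] by auto
  moreover have "\<phi> 0 \<noteq> 0" "\<psi> 0 \<noteq> 0"
    using \<phi>_nz \<psi>_nz r(1) by auto
  ultimately show ?thesis
    using hopf_coeff_tendsto r(1) \<phi>_hol \<psi>_hol eq_om eq_th unfolding has_ord0_def by auto
qed

end
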